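(* Let $\mathcal{Z}_1$ and $\Theta$ be measurable spaces, $n\ge1$, and let $S=(X_1,\dots,X_n)$ have i.i.d. coordinates in $\mathcal{Z}_1$; let $S'=(X_1',\dots,X_n')$ be an independent copy of $S$. Let $\ell:\Theta\times\mathcal{Z}_1\to[0,\infty)$ be measurable with $\mathbb{E}[\ell(\vartheta,X_1)^2]<\infty$ for every $\vartheta\in\Theta$. Define $L(\vartheta)=\mathbb{E}[\ell(\vartheta,X_1)]$, $\hat L_s(\vartheta)=\frac1n\sum_{k=1}^n\ell(\vartheta,z_k)$ for $s=(z_1,\dots,z_n)$, and for each fixed $\vartheta$ \[ V_\vartheta=\sum_{k=1}^n\mathbb{E}\big[(\hat L_S(\vartheta)-\hat L_{S^{(k)}}(\vartheta))^2\,\big|\,X_1,\dots,X_k\big]. \] Let $\hat p$ be a probability kernel from $\mathcal{Z}_1^n$ to $\Theta$, $p^0$ a probability measure on $\Theta$, and $\theta$ a random element of $\Theta$ whose conditional distribution given $S$ is $\hat p_S$, with $S'$ independent of $(S,\theta)$; assume $\int(\hat L_S(\vartheta)+L(\vartheta))\,\hat p_S(d\vartheta)<\infty$ a.s. Then for every $y>0$ and $x\ge 2$, with probability at least $1-e^{-x}$, \[ \big|\mathbb{E}[\hat L_S(\theta)-L(\theta)\mid S]\big|\le\sqrt{2\big(y+\mathbb{E}[V_\theta\mid S]\big)\Big(\mathrm{KL}(\hat p_S\,\|\,p^0)+x+\frac x2\ln\Big(1+\frac1y\mathbb{E}[V_\theta\mid S]\Big)\Big)}, \] and moreover, almost surely,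 \[ \mathbb{E}[V_\theta\mid S]\le\frac1{n^2}\,\mathbb{E}\Big[\sum_{k=1}^n\big(\ell(\theta,X_k)^2+\ell(\theta,X_k')^2\big)\,\Big|\,S\Big]. \]
   Context: $S^{(k)}$ denotes $S$ with its $k$-th coordinate $X_k$ replaced by $X_k'$. A probability kernel $\hat p$ assigns to each $s$ a probability measure $\hat p_s$ on $\Theta$, measurably in $s$. $V_\theta$ denotes $V_\vartheta$ evaluated at $\vartheta=\theta$, and conditional expectations given $S$ integrate $\theta$ against $\hat p_S$ (and average over $S'$ where it appears); e.g. $\mathbb{E}[V_\theta\mid S]=\int V_\vartheta\,\hat p_S(d\vartheta)$. $\mathrm{KL}(p\,\|\,q)=\int\ln\frac{dp}{dq}\,dp$ if $p\ll q$, and $+\infty$ otherwise. *)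

theory Defs
  imports "HOL-Probability.Probability"
begin

definition KL_div :: "'a measure \<Rightarrow> 'a measure \<Rightarrow> ereal" where
  "KL_div p q =
     (if absolutely_continuous q p then
        enn2ereal (\<integral>\<^sup>+ t. ennreal (max 0 (ln (enn2real (RN_deriv q p t)))) \<partial>p)
        - enn2ereal (\<integral>\<^sup>+ t. ennreal (max 0 (- ln (enn2real (RN_deriv q p t)))) \<partial>p)
      else \<infinity>)"

text \<open>Empirical risk: Lhat l n s th = (1/n) * sum_{k<n} l th (s k).
  Samples s are functions on the index set {..<n} (0-based indices).\<close>
definition Lhat :: "('t \<Rightarrow> 'z \<Rightarrow> real) \<Rightarrow> nat \<Rightarrow> (nat \<Rightarrow> 'z) \<Rightarrow> 't \<Rightarrow> real" where
  "Lhat l n s th = (1 / real n) * (\<Sum>k<n. l th (s k))"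

definition Lpop :: "('t \<Rightarrow> 'z \<Rightarrow> real) \<Rightarrow> 'z measure \<Rightarrow> 't \<Rightarrow> real" where
  "Lpop l D th = (\<integral> z. l th z \<partial>D)"

abbreviation sample_law :: "nat \<Rightarrow> 'z measure \<Rightarrow> (nat \<Rightarrow> 'z) measure" where
  "sample_law n D \<equiv> PiM {..<n} (\<lambda>_. D)"

text \<open>V_th evaluated at S = s (0-based index k corresponds to X_{k+1}):
  V_th = sum_k E[(Lhat_S th - Lhat_{S^(k)} th)^2 | X_0..X_k].
  Given the coordinates s_0..s_k, the unobserved coordinates X_i (i > k) and the
  replacement X_k' are independent with law D; they are realized by the
  coordinates of an independent copy s' (coordinates i > k and coordinate k).
  Nonnegative, so computed as a nonnegative integral.\<close>
definition Vcond :: "('t \<Rightarrow> 'z \<Rightarrow> real) \<Rightarrow> nat \<Rightarrow> 'z measure \<Rightarrow> 't \<Rightarrow> (nat \<Rightarrow> 'z) \<Rightarrow> ennreal" where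
  "Vcond l n D th s =
     (\<Sum>k<n. \<integral>\<^sup>+ s'. ennreal
        ((Lhat l n (\<lambda>i. if i \<le> k then s i else s' i) th
          - Lhat l n ((\<lambda>i. if i \<le> k then s i else s' i)(k := s' k)) th)\<^sup>2)
        \<partial>(sample_law n D))"

end

theory Submission
  imports Defs
begin

text \<open>For a fixed parameter the centred empirical risk X = Lhat - L is a sum of n i.i.d.
  centred terms, and V is the matching sum of second moments of a resampled coordinate.
  The inequality exp (a - a^2/2) \<le> 1 + a + a^2/2 shows that exp (u X - u^2 V / 2) has mean
  at most 1 for every u; mixing over u \<sim> N(0, 1/y) yields a variable
  sqrt (y / (y + V)) exp (X^2 / (2 (y + V))) of mean at most 1. Its average under the prior
  p0 still has mean at most 1, so by Markov's inequality it is at most exp x with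
  probability 1 - exp (-x). On that event the Donsker--Varadhan change of measure moves the
  bound to any posterior at the price of KL, Jensen's inequality controls the logarithmic
  term, and Cauchy--Schwarz with weight y + V turns the bound on the posterior mean of
  X^2 / (y + V) into the stated bound. The almost sure bound on the posterior mean of V is
  (a - b)^2 \<le> a^2 + b^2 for nonnegative losses.\<close>

lemma exp_sub_half_square_le: "exp (x - x\<^sup>2 / 2) \<le> 1 + x + x\<^sup>2 / (2::real)"
proof -
  define q where "q t = 1 + t + t\<^sup>2 / 2" for t :: real
  have q_pos: "q t > 0" for t
  proof -
    have "q t = ((t + 1)\<^sup>2 + 1) / 2" unfolding q_def by (simp add: power2_eq_square field_simps)
    moreover have "(t + 1)\<^sup>2 + 1 > (0::real)" by (simp add: add_nonneg_pos)
    ultimately show ?thesis by simp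
  qed
  define h where "h t = ln (q t) - t + t\<^sup>2 / 2" for t
  \<comment> \<open>The derivative of h has the sign of t, so h is minimal at 0, where it vanishes.\<close>
  have h_deriv: "(h has_real_derivative t * (1 + t/2 + t\<^sup>2/2) / q t) (at t)" for t
  proof -
    have "(h has_real_derivative (1 + t) / q t - 1 + t) (at t)"
      unfolding h_def using q_pos[of t] unfolding q_def
      by (auto intro!: derivative_eq_intros simp: power2_eq_square field_simps)
    moreover have "(1 + t) / q t - 1 + t = t * (1 + t/2 + t\<^sup>2/2) / q t"
      using q_pos[of t] unfolding q_def by (simp add: field_simps power2_eq_square)
    ultimately show ?thesis by simp
  qed
  have pos: "1 + t/2 + t\<^sup>2/2 > (0::real)" for t
    using q_pos[of t] zero_le_power2[of t] unfolding q_def by linarith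
  have "h 0 \<le> h x"
  proof (cases "0 \<le> x")
    case True
    show ?thesis
    proof (rule DERIV_nonneg_imp_nondecreasing[OF True])
      fix t :: real assume "0 \<le> t"
      then show "\<exists>d. (h has_real_derivative d) (at t) \<and> 0 \<le> d"
        using h_deriv pos[of t] q_pos[of t]
        by (blast intro: divide_nonneg_pos mult_nonneg_nonneg less_imp_le)
    qed
  next
    case False
    show ?thesis
    proof (rule DERIV_nonpos_imp_nonincreasing[of x 0 h])
      fix t :: real assume "t \<le> 0"
      then show "\<exists>d. (h has_real_derivative d) (at t) \<and> d \<le> 0"
        using h_deriv pos[of t] q_pos[of t]
        by (blast intro: divide_nonpos_pos mult_nonpos_nonneg less_imp_le)
    qed (use False in simp)
  qed
  then have "x - x\<^sup>2 / 2 \<le> ln (q x)"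
    by (simp add: h_def q_def)
  then have "exp (x - x\<^sup>2 / 2) \<le> q x"
    using q_pos by (metis exp_le_cancel_iff exp_ln)
  then show ?thesis unfolding q_def .
qed

lemma le_sqrt_mult_of_le_AM_GM:
  fixes X A B :: real
  assumes A: "0 \<le> A" and B: "0 \<le> B" and le: "\<And>t. t > 0 \<Longrightarrow> X \<le> (A / t + t * B) / 2"
  shows "X \<le> sqrt (A * B)"
proof (cases "A > 0 \<and> B > 0")
  case True
  define t where "t = sqrt (A / B)"
  have "t > 0" using True unfolding t_def by simp
  moreover have "A / t = sqrt (A * B)" "t * B = sqrt (A * B)"
    using True unfolding t_def by (simp_all add: real_sqrt_divide real_sqrt_mult field_simps)
  ultimately show ?thesis using le[of t] by simp
next
  case False
  then have AB: "A * B = 0" using A B by auto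
  have "X \<le> 0"
  proof (rule ccontr)
    assume "\<not> X \<le> 0"
    then have X: "X > 0" by simp
    show False
    proof (cases "B = 0")
      case True
      show False
      proof (cases "A = 0")
        case True
        then show False using le[of 1] X \<open>B = 0\<close> by simp
      next
        case False
        then show False using le[of "A / X"] X A \<open>B = 0\<close> by (simp add: field_simps)
      qed
    next
      case False
      show False using le[of "X / B"] X B False AB by (simp add: field_simps)
    qed
  qed
  then show ?thesis by (simp add: AB)
qed

lemma abs_le_AM_GM:
  fixes a w t :: real
  assumes "w > 0" and "t > 0"
  shows "\<bar>a\<bar> \<le> (a\<^sup>2 / w / t + t * w) / 2"
proof -
  have "0 \<le> (\<bar>a\<bar> - t * w)\<^sup>2" by simp
  then have "2 * (t * w) * \<bar>a\<bar> \<le> a\<^sup>2 + (t * w)\<^sup>2"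
    by (simp add: power2_eq_square algebra_simps)
  moreover have "(a\<^sup>2 / w / t + t * w) / 2 = (a\<^sup>2 + (t * w)\<^sup>2) / (2 * (t * w))"
    using assms by (simp add: field_simps power2_eq_square)
  ultimately show ?thesis
    using assms by (simp add: pos_le_divide_eq mult.commute)
qed

section \<open>Gaussian mixtures\<close>

lemma nn_integral_normal_density:
  assumes "\<sigma> > 0"
  shows "(\<integral>\<^sup>+u. ennreal (normal_density \<mu> \<sigma> u) \<partial>lborel) = 1"
  using integrable_normal_density[OF assms] integral_normal_density[OF assms]
  by (subst nn_integral_eq_integral) auto

definition normal_mixture :: "real \<Rightarrow> real \<Rightarrow> real \<Rightarrow> real" where
  "normal_mixture y m v = sqrt (y / (y + v)) * exp (m\<^sup>2 / (2 * (y + v)))"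

lemma normal_mixture_measurable[measurable]:
  assumes [measurable]: "f \<in> borel_measurable M" "g \<in> borel_measurable M"
  shows "(\<lambda>\<omega>. normal_mixture y (f \<omega>) (g \<omega>)) \<in> borel_measurable M"
  unfolding normal_mixture_def by measurable

text \<open>Completing the square: mixing exp (u m - u^2 v / 2) over u \<sim> N(0, 1/y)
  leaves a multiple of the density of N(m/(y+v), 1/(y+v)).\<close>
lemma nn_integral_normal_density_mult_exp:
  fixes y v m :: real
  assumes y: "y > 0" and v: "v \<ge> 0"
  shows "(\<integral>\<^sup>+u. ennreal (normal_density 0 (1 / sqrt y) u * exp (u * m - u\<^sup>2 * v / 2)) \<partial>lborel)
       = ennreal (normal_mixture y m v)"
proof -
  define w where "w = y + v"
  have w: "w > 0" using y v unfolding w_def by simp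
  have density_eq: "normal_density 0 (1 / sqrt y) u * exp (u * m - u\<^sup>2 * v / 2)
      = normal_mixture y m v * normal_density (m / w) (1 / sqrt w) u" for u
  proof -
    have exponent: "- (u - 0)\<^sup>2 / (2 * (1 / sqrt y)\<^sup>2) + (u * m - u\<^sup>2 * v / 2)
        = m\<^sup>2 / (2 * w) + - (u - m / w)\<^sup>2 / (2 * (1 / sqrt w)\<^sup>2)"
    proof -
      have sq: "(1 / sqrt y)\<^sup>2 = 1 / y" "(1 / sqrt w)\<^sup>2 = 1 / w"
        using y w by (simp_all add: power_divide)
      have v_eq: "v = w - y" unfolding w_def by simp
      show ?thesis unfolding sq v_eq using y w by (simp add: power2_eq_square field_simps)
    qed
    have norm: "1 / sqrt (2 * pi * (1 / sqrt y)\<^sup>2) = sqrt (y / w) * (1 / sqrt (2 * pi * (1 / sqrt w)\<^sup>2))"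
      using y w by (simp add: power_divide real_sqrt_divide real_sqrt_mult)
    have "normal_density 0 (1 / sqrt y) u * exp (u * m - u\<^sup>2 * v / 2)
        = 1 / sqrt (2 * pi * (1 / sqrt y)\<^sup>2) *
          exp (- (u - 0)\<^sup>2 / (2 * (1 / sqrt y)\<^sup>2) + (u * m - u\<^sup>2 * v / 2))"
      unfolding normal_density_def exp_add by simp
    also have "\<dots> = sqrt (y / w) * (1 / sqrt (2 * pi * (1 / sqrt w)\<^sup>2)) *
          (exp (m\<^sup>2 / (2 * w)) * exp (- (u - m / w)\<^sup>2 / (2 * (1 / sqrt w)\<^sup>2)))"
      unfolding exponent exp_add norm ..
    also have "\<dots> = normal_mixture y m v * normal_density (m / w) (1 / sqrt w) u"
      by (simp add: normal_density_def normal_mixture_def w_def)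
    finally show ?thesis .
  qed
  have "0 \<le> normal_mixture y m v"
    using y w unfolding normal_mixture_def w_def by simp
  then have "(\<integral>\<^sup>+u. ennreal (normal_density 0 (1 / sqrt y) u * exp (u * m - u\<^sup>2 * v / 2)) \<partial>lborel)
      = (\<integral>\<^sup>+u. ennreal (normal_mixture y m v) * ennreal (normal_density (m / w) (1 / sqrt w) u) \<partial>lborel)"
    unfolding density_eq by (intro nn_integral_cong ennreal_mult) simp_all
  also have "\<dots> = ennreal (normal_mixture y m v)"
    using w by (subst nn_integral_cmult) (simp_all add: nn_integral_normal_density)
  finally show ?thesis .
qed

lemma normal_mixture_eq_exp:
  assumes "y > 0" and "v \<ge> 0"
  shows "normal_mixture y m v = exp (m\<^sup>2 / (2 * (y + v)) - ln (1 + v / y) / 2)"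
proof -
  have pos: "1 + v / y > 0" using assms by (simp add: add_pos_nonneg)
  have "exp (ln (1 + v / y) / 2) = sqrt (1 + v / y)"
    using pos by (simp add: exp_ln_iff powr_half_sqrt[symmetric] powr_def)
  moreover have "sqrt (y / (y + v)) = 1 / sqrt (1 + v / y)"
    using assms by (simp add: field_simps real_sqrt_divide)
  ultimately show ?thesis
    unfolding normal_mixture_def by (simp add: exp_diff)
qed

section \<open>Exponential supermartingales\<close>

lemma (in prob_space) nn_integral_exp_centered_le_1:
  assumes [measurable]: "f \<in> borel_measurable M"
    and int: "integrable M f" and int_sq: "integrable M (\<lambda>\<omega>. (f \<omega>)\<^sup>2)" and mean: "expectation f = 0"
  shows "(\<integral>\<^sup>+\<omega>. ennreal (exp (t * f \<omega> - t\<^sup>2 * ((f \<omega>)\<^sup>2 + expectation (\<lambda>\<omega>. (f \<omega>)\<^sup>2)) / 2)) \<partial>M) \<le> 1"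
proof -
  define a where "a = t\<^sup>2 * expectation (\<lambda>\<omega>. (f \<omega>)\<^sup>2) / 2"
  define g where "g \<omega> = exp (- a) * (1 + t * f \<omega> + (t * f \<omega>)\<^sup>2 / 2)" for \<omega>
  have g_ge: "exp (t * f \<omega> - t\<^sup>2 * ((f \<omega>)\<^sup>2 + expectation (\<lambda>\<omega>. (f \<omega>)\<^sup>2)) / 2) \<le> g \<omega>" for \<omega>
  proof -
    have "t * f \<omega> - t\<^sup>2 * ((f \<omega>)\<^sup>2 + expectation (\<lambda>\<omega>. (f \<omega>)\<^sup>2)) / 2
        = - a + (t * f \<omega> - (t * f \<omega>)\<^sup>2 / 2)"
      unfolding a_def by (simp add: power_mult_distrib algebra_simps)
    then have "exp (t * f \<omega> - t\<^sup>2 * ((f \<omega>)\<^sup>2 + expectation (\<lambda>\<omega>. (f \<omega>)\<^sup>2)) / 2)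
        = exp (- a) * exp (t * f \<omega> - (t * f \<omega>)\<^sup>2 / 2)"
      by (simp add: exp_add[symmetric])
    also have "\<dots> \<le> g \<omega>"
      unfolding g_def by (rule mult_left_mono[OF exp_sub_half_square_le]) simp
    finally show ?thesis .
  qed
  have g_nonneg: "0 \<le> g \<omega>" for \<omega>
    using g_ge[of \<omega>] by (meson exp_ge_zero order_trans)
  have "(\<integral>\<^sup>+\<omega>. ennreal (exp (t * f \<omega> - t\<^sup>2 * ((f \<omega>)\<^sup>2 + expectation (\<lambda>\<omega>. (f \<omega>)\<^sup>2)) / 2)) \<partial>M)
      \<le> (\<integral>\<^sup>+\<omega>. ennreal (g \<omega>) \<partial>M)"
    by (intro nn_integral_mono ennreal_leI g_ge)
  also have "\<dots> = ennreal (expectation g)"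
    using int int_sq g_nonneg unfolding g_def power_mult_distrib
    by (intro nn_integral_eq_integral AE_I2) auto
  also have "expectation g = exp (- a) * (1 + a)"
    using int int_sq mean unfolding a_def g_def power_mult_distrib
    by (simp add: prob_space)
  also have "ennreal (exp (- a) * (1 + a)) \<le> 1"
    using exp_ge_add_one_self[of a] by (simp add: exp_minus field_simps)
  finally show ?thesis .
qed

lemma nn_integral_PiM_exp_sum_le_1:
  assumes D: "prob_space D" and I: "finite I" and [measurable]: "f \<in> borel_measurable D"
    and int: "integrable D f" and int_sq: "integrable D (\<lambda>z. (f z)\<^sup>2)" and mean: "(\<integral>z. f z \<partial>D) = 0"
  defines "c \<equiv> \<integral>z. (f z)\<^sup>2 \<partial>D"
  shows "(\<integral>\<^sup>+\<omega>. ennreal (exp (u * (\<Sum>i\<in>I. f (\<omega> i)) - u\<^sup>2 * (\<Sum>i\<in>I. (f (\<omega> i))\<^sup>2 + c) / 2))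
      \<partial>PiM I (\<lambda>_. D)) \<le> 1"
proof -
  interpret D: prob_space D by (rule D)
  interpret product_sigma_finite "\<lambda>_. D"
    by (simp add: product_sigma_finite_def D.sigma_finite_measure_axioms)
  define g where "g z = exp (u * f z - u\<^sup>2 * ((f z)\<^sup>2 + c) / 2)" for z
  have "exp (u * (\<Sum>i\<in>I. f (\<omega> i)) - u\<^sup>2 * (\<Sum>i\<in>I. (f (\<omega> i))\<^sup>2 + c) / 2) = (\<Prod>i\<in>I. g (\<omega> i))" for \<omega>
    unfolding g_def exp_sum[OF I, symmetric]
    by (simp add: sum_subtractf sum_distrib_left sum_divide_distrib)
  then have "(\<integral>\<^sup>+\<omega>. ennreal (exp (u * (\<Sum>i\<in>I. f (\<omega> i)) - u\<^sup>2 * (\<Sum>i\<in>I. (f (\<omega> i))\<^sup>2 + c) / 2))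
      \<partial>PiM I (\<lambda>_. D)) = (\<integral>\<^sup>+\<omega>. (\<Prod>i\<in>I. ennreal (g (\<omega> i))) \<partial>PiM I (\<lambda>_. D))"
    by (simp add: prod_ennreal g_def)
  also have "\<dots> = (\<Prod>i\<in>I. \<integral>\<^sup>+z. ennreal (g z) \<partial>D)"
    using I by (intro product_nn_integral_prod) (auto simp: g_def)
  also have "\<dots> \<le> 1"
    using D.nn_integral_exp_centered_le_1[OF _ int int_sq mean, of u]
    by (intro prod_le_1) (simp_all add: g_def c_def)
  finally show ?thesis .
qed

text \<open>The method of mixtures: averaging the supermartingale bound over the scale u with
  the prior N(0, 1/y) removes the free parameter u.\<close>
lemma (in prob_space) nn_integral_normal_mixture_le_1:
  assumes y: "y > 0" and [measurable]: "X \<in> borel_measurable M" "V \<in> borel_measurable M"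
    and V: "\<And>\<omega>. \<omega> \<in> space M \<Longrightarrow> 0 \<le> V \<omega>"
    and exp_le: "\<And>u. (\<integral>\<^sup>+\<omega>. ennreal (exp (u * X \<omega> - u\<^sup>2 * V \<omega> / 2)) \<partial>M) \<le> 1"
  shows "(\<integral>\<^sup>+\<omega>. ennreal (normal_mixture y (X \<omega>) (V \<omega>)) \<partial>M) \<le> 1"
proof -
  define N where "N u = normal_density 0 (1 / sqrt y) u" for u
  interpret pair_sigma_finite lborel M
    by (intro pair_sigma_finite.intro sigma_finite_lborel sigma_finite_measure_axioms)
  have "(\<integral>\<^sup>+\<omega>. ennreal (normal_mixture y (X \<omega>) (V \<omega>)) \<partial>M)
      = (\<integral>\<^sup>+\<omega>. \<integral>\<^sup>+u. ennreal (N u * exp (u * X \<omega> - u\<^sup>2 * V \<omega> / 2)) \<partial>lborel \<partial>M)"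
    unfolding N_def using y V by (intro nn_integral_cong) (simp add: nn_integral_normal_density_mult_exp)
  also have "\<dots> = (\<integral>\<^sup>+u. \<integral>\<^sup>+\<omega>. ennreal (N u * exp (u * X \<omega> - u\<^sup>2 * V \<omega> / 2)) \<partial>M \<partial>lborel)"
    unfolding N_def by (intro Fubini') measurable
  also have "\<dots> = (\<integral>\<^sup>+u. ennreal (N u) * \<integral>\<^sup>+\<omega>. ennreal (exp (u * X \<omega> - u\<^sup>2 * V \<omega> / 2)) \<partial>M \<partial>lborel)"
    unfolding N_def by (intro nn_integral_cong) (simp add: ennreal_mult nn_integral_cmult)
  also have "\<dots> \<le> (\<integral>\<^sup>+u. ennreal (N u) \<partial>lborel)"
    using exp_le by (intro nn_integral_mono) (simp add: mult_left_le)
  also have "\<dots> = 1"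
    unfolding N_def using y by (simp add: nn_integral_normal_density)
  finally show ?thesis .
qed

lemma (in prob_space) prob_nn_integral_le_exp:
  assumes [measurable]: "f \<in> borel_measurable M" and int: "(\<integral>\<^sup>+\<omega>. f \<omega> \<partial>M) \<le> 1"
  shows "1 - exp (- x) \<le> prob {\<omega> \<in> space M. f \<omega> \<le> ennreal (exp x)}"
proof -
  have "emeasure M (space M - {\<omega> \<in> space M. f \<omega> \<le> ennreal (exp x)})
      \<le> emeasure M {\<omega> \<in> space M. 1 \<le> ennreal (exp (- x)) * f \<omega>}"
  proof (rule emeasure_mono)
    show "space M - {\<omega> \<in> space M. f \<omega> \<le> ennreal (exp x)} \<subseteq> {\<omega> \<in> space M. 1 \<le> ennreal (exp (- x)) * f \<omega>}"
    proof clarify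
      fix \<omega> assume "\<omega> \<in> space M" "\<not> f \<omega> \<le> ennreal (exp x)"
      then have "ennreal (exp (- x)) * ennreal (exp x) \<le> ennreal (exp (- x)) * f \<omega>"
        by (intro mult_left_mono) auto
      then show "1 \<le> ennreal (exp (- x)) * f \<omega>"
        by (simp add: ennreal_mult[symmetric] exp_minus del: ennreal_mult)
    qed
  qed measurable
  also have "\<dots> \<le> ennreal (exp (- x)) * (\<integral>\<^sup>+\<omega>. f \<omega> * indicator (space M) \<omega> \<partial>M)"
    by (rule nn_integral_Markov_inequality) auto
  also have "(\<integral>\<^sup>+\<omega>. f \<omega> * indicator (space M) \<omega> \<partial>M) = (\<integral>\<^sup>+\<omega>. f \<omega> \<partial>M)"
    by (intro nn_integral_cong) simp
  also have "ennreal (exp (- x)) * (\<integral>\<^sup>+\<omega>. f \<omega> \<partial>M) \<le> ennreal (exp (- x))"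
    using int by (intro mult_left_le) simp_all
  finally have "prob (space M - {\<omega> \<in> space M. f \<omega> \<le> ennreal (exp x)}) \<le> exp (- x)"
    by (simp add: emeasure_eq_measure)
  then show ?thesis by (simp add: prob_compl)
qed

lemma abs_integral_le_sqrt_weighted:
  fixes f w :: "'a \<Rightarrow> real"
  assumes [measurable]: "f \<in> borel_measurable M"
    and w: "\<And>\<omega>. \<omega> \<in> space M \<Longrightarrow> 0 < w \<omega>"
    and int_w: "integrable M w" and int_fw: "integrable M (\<lambda>\<omega>. (f \<omega>)\<^sup>2 / w \<omega>)"
  shows "integrable M f"
    and "\<bar>\<integral>\<omega>. f \<omega> \<partial>M\<bar> \<le> sqrt ((\<integral>\<omega>. (f \<omega>)\<^sup>2 / w \<omega> \<partial>M) * (\<integral>\<omega>. w \<omega> \<partial>M))"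
proof -
  have bound: "\<bar>f \<omega>\<bar> \<le> ((f \<omega>)\<^sup>2 / w \<omega> / t + t * w \<omega>) / 2" if "\<omega> \<in> space M" "t > 0" for \<omega> t
    using abs_le_AM_GM w that by blast
  show int_f: "integrable M f"
  proof (rule Bochner_Integration.integrable_bound)
    show "integrable M (\<lambda>\<omega>. ((f \<omega>)\<^sup>2 / w \<omega> / 1 + 1 * w \<omega>) / 2)"
      using int_w int_fw by simp
    show "AE \<omega> in M. norm (f \<omega>) \<le> norm (((f \<omega>)\<^sup>2 / w \<omega> / 1 + 1 * w \<omega>) / 2)"
      using bound[of _ 1] by (intro AE_I2) (auto intro: order_trans[OF _ abs_ge_self])
  qed simp
  show "\<bar>\<integral>\<omega>. f \<omega> \<partial>M\<bar> \<le> sqrt ((\<integral>\<omega>. (f \<omega>)\<^sup>2 / w \<omega> \<partial>M) * (\<integral>\<omega>. w \<omega> \<partial>M))"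
  proof (rule le_sqrt_mult_of_le_AM_GM)
    have "\<omega> \<in> space M \<Longrightarrow> 0 \<le> w \<omega>" for \<omega> using w less_imp_le by blast
    then show "0 \<le> (\<integral>\<omega>. (f \<omega>)\<^sup>2 / w \<omega> \<partial>M)" "0 \<le> (\<integral>\<omega>. w \<omega> \<partial>M)"
      by (auto intro!: integral_nonneg_AE AE_I2)
    fix t :: real assume t: "t > 0"
    have "\<bar>\<integral>\<omega>. f \<omega> \<partial>M\<bar> \<le> (\<integral>\<omega>. \<bar>f \<omega>\<bar> \<partial>M)"
      by (rule integral_abs_bound)
    also have "\<dots> \<le> (\<integral>\<omega>. ((f \<omega>)\<^sup>2 / w \<omega> / t + t * w \<omega>) / 2 \<partial>M)"
    proof (rule integral_mono)
      show "integrable M (\<lambda>\<omega>. ((f \<omega>)\<^sup>2 / w \<omega> / t + t * w \<omega>) / 2)"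
        using int_w int_fw by (intro Bochner_Integration.integrable_divide
            Bochner_Integration.integrable_add Bochner_Integration.integrable_mult_right)
    qed (use int_f bound t in auto)
    also have "\<dots> = ((\<integral>\<omega>. (f \<omega>)\<^sup>2 / w \<omega> \<partial>M) / t + t * (\<integral>\<omega>. w \<omega> \<partial>M)) / 2"
      using int_w int_fw by (simp del: divide_divide_eq_left)
    finally show "\<bar>\<integral>\<omega>. f \<omega> \<partial>M\<bar> \<le> ((\<integral>\<omega>. (f \<omega>)\<^sup>2 / w \<omega> \<partial>M) / t + t * (\<integral>\<omega>. w \<omega> \<partial>M)) / 2" .
  qed
qed

lemma ln_one_plus_div_le_tangent:
  fixes y v e :: real
  assumes "y > 0" and "v \<ge> 0" and "e \<ge> 0"
  shows "ln (1 + v / y) \<le> ln (1 + e / y) + (v - e) / (y + e)"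
proof -
  have "1 + v / y = (y + v) / y" "1 + e / y = (y + e) / y"
    using assms by (simp_all add: field_simps)
  then have "ln (1 + v / y) - ln (1 + e / y) = ln ((y + v) / (y + e))"
    using assms by (simp add: ln_div)
  also have "\<dots> \<le> (y + v) / (y + e) - 1"
    using assms by (intro ln_le_minus_one) simp
  also have "\<dots> = (v - e) / (y + e)"
    using assms by (simp add: field_simps)
  finally show ?thesis by simp
qed

lemma (in prob_space) integral_ln_one_plus_div_le:
  fixes V :: "'a \<Rightarrow> real"
  assumes y: "y > 0" and int: "integrable M V" and V: "\<And>\<omega>. \<omega> \<in> space M \<Longrightarrow> 0 \<le> V \<omega>"
  shows "integrable M (\<lambda>\<omega>. ln (1 + V \<omega> / y))"
    and "(\<integral>\<omega>. ln (1 + V \<omega> / y) \<partial>M) \<le> ln (1 + expectation V / y)"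
proof -
  have [measurable]: "V \<in> borel_measurable M" using int by simp
  show int_ln: "integrable M (\<lambda>\<omega>. ln (1 + V \<omega> / y))"
  proof (rule Bochner_Integration.integrable_bound)
    show "integrable M (\<lambda>\<omega>. V \<omega> / y)" using int by simp
    show "AE \<omega> in M. norm (ln (1 + V \<omega> / y)) \<le> norm (V \<omega> / y)"
      using V y by (intro AE_I2) (simp add: ln_add_one_self_le_self)
  qed simp
  define e where "e = expectation V"
  have e: "0 \<le> e" unfolding e_def using V by (intro integral_nonneg_AE AE_I2) auto
  have "(\<integral>\<omega>. ln (1 + V \<omega> / y) \<partial>M) \<le> (\<integral>\<omega>. ln (1 + e / y) + (V \<omega> - e) / (y + e) \<partial>M)"
    using int_ln int y V e by (intro integral_mono ln_one_plus_div_le_tangent) auto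
  also have "\<dots> = ln (1 + e / y)"
    using int by (simp add: prob_space diff_divide_distrib e_def)
  finally show "(\<integral>\<omega>. ln (1 + V \<omega> / y) \<partial>M) \<le> ln (1 + expectation V / y)"
    unfolding e_def .
qed

section \<open>Change of measure\<close>

lemma mult_max_0_neg_ln_le_1:
  fixes r :: real
  assumes "0 \<le> r"
  shows "r * max 0 (- ln r) \<le> 1"
proof (cases "r = 0")
  case False
  then have r: "r > 0" using assms by simp
  have "- ln r \<le> 1 / r - 1"
    using ln_le_minus_one[of "1 / r"] r by (simp add: ln_div)
  then have "r * (- ln r) \<le> 1 - r"
    using r by (simp add: field_simps)
  then show ?thesis
    using r by (simp add: max_def)
qed simp

lemma nn_integral_neg_ln_RN_deriv_le_1:
  fixes \<rho> p0 :: "'a measure"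
  assumes \<rho>: "sigma_finite_measure \<rho>" and p0: "prob_space p0"
    and ac: "absolutely_continuous p0 \<rho>" and sets: "sets \<rho> = sets p0"
  shows "(\<integral>\<^sup>+t. ennreal (max 0 (- ln (enn2real (RN_deriv p0 \<rho> t)))) \<partial>\<rho>) \<le> 1"
proof -
  interpret p0: prob_space p0 by (rule p0)
  have "(\<integral>\<^sup>+t. ennreal (max 0 (- ln (enn2real (RN_deriv p0 \<rho> t)))) \<partial>\<rho>)
      = (\<integral>\<^sup>+t. RN_deriv p0 \<rho> t * ennreal (max 0 (- ln (enn2real (RN_deriv p0 \<rho> t)))) \<partial>p0)"
    by (rule p0.RN_deriv_nn_integral[OF ac sets]) simp
  also have "\<dots> \<le> (\<integral>\<^sup>+t. 1 \<partial>p0)"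
  proof (rule nn_integral_mono_AE)
    show "AE t in p0. RN_deriv p0 \<rho> t * ennreal (max 0 (- ln (enn2real (RN_deriv p0 \<rho> t)))) \<le> 1"
      using p0.RN_deriv_finite[OF \<rho> ac sets]
    proof eventually_elim
      case (elim t)
      define r where "r = enn2real (RN_deriv p0 \<rho> t)"
      have r: "0 \<le> r" and r_eq: "RN_deriv p0 \<rho> t = ennreal r"
        using elim unfolding r_def by (cases "RN_deriv p0 \<rho> t"; simp)+
      have "ennreal r * ennreal (max 0 (- ln r)) = ennreal (r * max 0 (- ln r))"
        using r by (simp add: ennreal_mult)
      also have "\<dots> \<le> 1"
        using mult_max_0_neg_ln_le_1[OF r] by simp
      finally show ?case unfolding r_eq using r by simp
    qed
  qed
  also have "\<dots> = 1"
    by (simp add: p0.emeasure_space_1)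
  finally show ?thesis .
qed

lemma nn_integral_exp_minus_ln_RN_deriv_le:
  fixes \<rho> p0 :: "'a measure" and h :: "'a \<Rightarrow> real"
  assumes \<rho>: "sigma_finite_measure \<rho>" and p0: "sigma_finite_measure p0"
    and ac: "absolutely_continuous p0 \<rho>" and sets: "sets \<rho> = sets p0"
    and [measurable]: "h \<in> borel_measurable p0"
  shows "(\<integral>\<^sup>+t. ennreal (exp (h t - ln (enn2real (RN_deriv p0 \<rho> t)))) \<partial>\<rho>) \<le> (\<integral>\<^sup>+t. ennreal (exp (h t)) \<partial>p0)"
proof -
  interpret p0: sigma_finite_measure p0 by (rule p0)
  have "(\<integral>\<^sup>+t. ennreal (exp (h t - ln (enn2real (RN_deriv p0 \<rho> t)))) \<partial>\<rho>)
      = (\<integral>\<^sup>+t. RN_deriv p0 \<rho> t * ennreal (exp (h t - ln (enn2real (RN_deriv p0 \<rho> t)))) \<partial>p0)"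
    by (rule p0.RN_deriv_nn_integral[OF ac sets]) simp
  also have "\<dots> \<le> (\<integral>\<^sup>+t. ennreal (exp (h t)) \<partial>p0)"
  proof (rule nn_integral_mono_AE)
    show "AE t in p0. RN_deriv p0 \<rho> t * ennreal (exp (h t - ln (enn2real (RN_deriv p0 \<rho> t))))
        \<le> ennreal (exp (h t))"
      using p0.RN_deriv_finite[OF \<rho> ac sets]
    proof eventually_elim
      case (elim t)
      define r where "r = enn2real (RN_deriv p0 \<rho> t)"
      have r: "0 \<le> r" and r_eq: "RN_deriv p0 \<rho> t = ennreal r"
        using elim unfolding r_def by (cases "RN_deriv p0 \<rho> t"; simp)+
      have "r * exp (h t - ln r) \<le> exp (h t)"
        using r by (cases "r = 0") (simp_all add: exp_diff)
      then show ?case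
        unfolding r_eq using r by (simp add: ennreal_mult[symmetric] del: ennreal_mult)
    qed
  qed
  finally show ?thesis .
qed

text \<open>A finite divergence is the integral of the log-density; finiteness of the
  positive part is the hypothesis, that of the negative part holds always.\<close>
lemma KL_div_finite_eq_integral:
  fixes \<rho> p0 :: "'a measure"
  assumes \<rho>: "prob_space \<rho>" and p0: "prob_space p0" and sets: "sets \<rho> = sets p0"
    and KL: "KL_div \<rho> p0 \<noteq> \<infinity>"
  defines "R \<equiv> \<lambda>t. enn2real (RN_deriv p0 \<rho> t)"
  shows "absolutely_continuous p0 \<rho>"
    and "integrable \<rho> (\<lambda>t. ln (R t))"
    and "real_of_ereal (KL_div \<rho> p0) = (\<integral>t. ln (R t) \<partial>\<rho>)"
proof -
  note [measurable_cong] = sets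
  show ac: "absolutely_continuous p0 \<rho>"
    using KL unfolding KL_div_def by (auto split: if_splits)
  define P where "P t = max 0 (ln (R t))" for t
  define N where "N t = max 0 (- ln (R t))" for t
  have [measurable]: "P \<in> borel_measurable p0" "N \<in> borel_measurable p0"
    unfolding P_def N_def R_def by measurable
  have PN_nonneg: "0 \<le> P t" "0 \<le> N t" for t
    unfolding P_def N_def by simp_all
  have KL_eq: "KL_div \<rho> p0 = enn2ereal (\<integral>\<^sup>+t. ennreal (P t) \<partial>\<rho>) - enn2ereal (\<integral>\<^sup>+t. ennreal (N t) \<partial>\<rho>)"
    using ac unfolding KL_div_def P_def N_def R_def by simp
  have N_fin: "(\<integral>\<^sup>+t. ennreal (N t) \<partial>\<rho>) < \<infinity>"
    using nn_integral_neg_ln_RN_deriv_le_1[OF prob_space_imp_sigma_finite[OF \<rho>] p0 ac sets]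
    unfolding N_def R_def by (simp add: order.strict_trans1)
  then obtain c where c: "(\<integral>\<^sup>+t. ennreal (N t) \<partial>\<rho>) = ennreal c" "0 \<le> c"
    by (cases "\<integral>\<^sup>+t. ennreal (N t) \<partial>\<rho>") auto
  have "(\<integral>\<^sup>+t. ennreal (P t) \<partial>\<rho>) \<noteq> \<infinity>"
    using KL unfolding KL_eq c by auto
  then have int_P: "integrable \<rho> P" and int_N: "integrable \<rho> N"
    using N_fin by (auto intro!: integrableI_bounded simp: PN_nonneg less_top)
  have lnR: "(\<lambda>t. ln (R t)) = (\<lambda>t. P t - N t)"
    unfolding P_def N_def by (simp add: max_def fun_eq_iff)
  then show "integrable \<rho> (\<lambda>t. ln (R t))"
    using int_P int_N by simp
  have "(\<integral>\<^sup>+t. ennreal (P t) \<partial>\<rho>) = ennreal (\<integral>t. P t \<partial>\<rho>)"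
    "(\<integral>\<^sup>+t. ennreal (N t) \<partial>\<rho>) = ennreal (\<integral>t. N t \<partial>\<rho>)"
    using int_P int_N PN_nonneg by (auto intro!: nn_integral_eq_integral)
  then show "real_of_ereal (KL_div \<rho> p0) = (\<integral>t. ln (R t) \<partial>\<rho>)"
    unfolding KL_eq lnR using int_P int_N PN_nonneg by (simp add: integral_nonneg_AE)
qed

text \<open>With a = U - B - ln (d\<rho>/dp0) - x, the
  inequality 1 + a \<le> exp a gives U \<le> B + ln (d\<rho>/dp0) + (x - 1) + exp a pointwise,
  and exp a has \<rho>-integral at most that of exp (U - B - x) under p0, i.e. at most 1.\<close>
lemma integral_le_plus_KL_div:
  fixes \<rho> p0 :: "'a measure" and U B :: "'a \<Rightarrow> real"
  assumes \<rho>: "prob_space \<rho>" and p0: "prob_space p0" and sets: "sets \<rho> = sets p0"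
    and KL: "KL_div \<rho> p0 \<noteq> \<infinity>"
    and [measurable]: "U \<in> borel_measurable p0" "B \<in> borel_measurable p0"
    and U: "\<And>t. t \<in> space p0 \<Longrightarrow> 0 \<le> U t" and int_B: "integrable \<rho> B"
    and exp_le: "(\<integral>\<^sup>+t. ennreal (exp (U t - B t)) \<partial>p0) \<le> ennreal (exp x)"
  shows "integrable \<rho> U"
    and "(\<integral>t. U t \<partial>\<rho>) \<le> (\<integral>t. B t \<partial>\<rho>) + real_of_ereal (KL_div \<rho> p0) + x"
proof -
  interpret \<rho>: prob_space \<rho> by (rule \<rho>)
  note [measurable_cong] = sets
  have space: "space \<rho> = space p0" using sets by (rule sets_eq_imp_space_eq)
  define R where "R t = enn2real (RN_deriv p0 \<rho> t)" for t
  have ac: "absolutely_continuous p0 \<rho>" and int_lnR: "integrable \<rho> (\<lambda>t. ln (R t))"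
    and KL_eq: "real_of_ereal (KL_div \<rho> p0) = (\<integral>t. ln (R t) \<partial>\<rho>)"
    using KL_div_finite_eq_integral[OF \<rho> p0 sets KL] unfolding R_def by auto
  define E where "E t = exp (U t - B t - x - ln (R t))" for t
  have [measurable]: "E \<in> borel_measurable p0"
    unfolding E_def R_def by measurable
  have "(\<integral>\<^sup>+t. ennreal (E t) \<partial>\<rho>) \<le> (\<integral>\<^sup>+t. ennreal (exp (U t - B t - x)) \<partial>p0)"
    unfolding E_def R_def using \<rho> p0 ac sets
    by (intro nn_integral_exp_minus_ln_RN_deriv_le) (auto intro: prob_space_imp_sigma_finite)
  also have "\<dots> = (\<integral>\<^sup>+t. ennreal (exp (U t - B t)) \<partial>p0) * ennreal (exp (- x))"
    by (subst nn_integral_multc[symmetric]) (simp_all add: exp_diff exp_minus ennreal_mult'[symmetric] divide_inverse)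
  also have "\<dots> \<le> ennreal (exp x) * ennreal (exp (- x))"
    by (rule mult_right_mono[OF exp_le]) simp
  also have "\<dots> = 1"
    by (simp add: ennreal_mult[symmetric] exp_minus del: ennreal_mult)
  finally have E_le: "(\<integral>\<^sup>+t. ennreal (E t) \<partial>\<rho>) \<le> 1" .
  then have int_E: "integrable \<rho> E"
    by (intro integrableI_bounded) (auto simp: E_def order.strict_trans1)
  have "ennreal (\<integral>t. E t \<partial>\<rho>) \<le> 1"
    using E_le int_E by (subst nn_integral_eq_integral[symmetric]) (auto simp: E_def)
  then have int_E_le: "(\<integral>t. E t \<partial>\<rho>) \<le> 1"
    by (simp add: ennreal_le_1)
  define F where "F t = B t + ln (R t) + (x - 1) + E t" for t
  have int_F: "integrable \<rho> F"
    unfolding F_def using int_B int_lnR int_E by simp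
  have U_le: "U t \<le> F t" for t
    using exp_ge_add_one_self[of "U t - B t - x - ln (R t)"] unfolding F_def E_def by linarith
  show int_U: "integrable \<rho> U"
  proof (rule Bochner_Integration.integrable_bound[OF int_F])
    show "AE t in \<rho>. norm (U t) \<le> norm (F t)"
      using U space by (intro AE_I2) (simp add: abs_of_nonneg order_trans[OF U_le abs_ge_self])
  qed simp
  have "(\<integral>t. U t \<partial>\<rho>) \<le> (\<integral>t. F t \<partial>\<rho>)"
    using int_U int_F U_le by (intro integral_mono) auto
  also have "\<dots> = (\<integral>t. B t \<partial>\<rho>) + real_of_ereal (KL_div \<rho> p0) + (x - 1) + (\<integral>t. E t \<partial>\<rho>)"
    unfolding F_def KL_eq using int_B int_lnR int_E by (simp add: \<rho>.prob_space)
  finally show "(\<integral>t. U t \<partial>\<rho>) \<le> (\<integral>t. B t \<partial>\<rho>) + real_of_ereal (KL_div \<rho> p0) + x"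
    using int_E_le by linarith
qed

text \<open>With U = X^2 / (2 (y + V)) and B = ln (1 + V / y) / 2 the hypothesis says that exp (U - B)
  has p0-integral at most exp x; change of measure bounds the \<rho>-mean of U, and
  Cauchy--Schwarz with weight y + V turns it into a bound on the \<rho>-mean of X.\<close>
lemma abs_integral_le_PAC_Bayes:
  fixes \<rho> p0 :: "'a measure" and X V :: "'a \<Rightarrow> real"
  assumes \<rho>: "prob_space \<rho>" and p0: "prob_space p0" and sets: "sets \<rho> = sets p0"
    and KL: "KL_div \<rho> p0 \<noteq> \<infinity>"
    and [measurable]: "X \<in> borel_measurable p0" "V \<in> borel_measurable p0"
    and V: "\<And>t. t \<in> space p0 \<Longrightarrow> 0 \<le> V t" and int_V: "integrable \<rho> V"
    and y: "y > 0" and x: "x \<ge> 1"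
    and mixture_le: "(\<integral>\<^sup>+t. ennreal (normal_mixture y (X t) (V t)) \<partial>p0) \<le> ennreal (exp x)"
  shows "\<bar>\<integral>t. X t \<partial>\<rho>\<bar> \<le> sqrt (2 * (y + (\<integral>t. V t \<partial>\<rho>)) *
           (real_of_ereal (KL_div \<rho> p0) + x + x / 2 * ln (1 + (\<integral>t. V t \<partial>\<rho>) / y)))"
proof -
  interpret \<rho>: prob_space \<rho> by (rule \<rho>)
  note [measurable_cong] = sets
  have space: "space \<rho> = space p0" using sets by (rule sets_eq_imp_space_eq)
  define EV where "EV = (\<integral>t. V t \<partial>\<rho>)"
  define KL' where "KL' = real_of_ereal (KL_div \<rho> p0)"
  define U where "U t = (X t)\<^sup>2 / (2 * (y + V t))" for t
  define B where "B t = ln (1 + V t / y) / 2" for t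
  have EV: "0 \<le> EV" unfolding EV_def using V space by (intro integral_nonneg_AE AE_I2) auto
  have int_lnV: "integrable \<rho> (\<lambda>t. ln (1 + V t / y))"
    and lnV_le: "(\<integral>t. ln (1 + V t / y) \<partial>\<rho>) \<le> ln (1 + EV / y)"
    using \<rho>.integral_ln_one_plus_div_le[OF y int_V] V space unfolding EV_def by auto
  have int_U: "integrable \<rho> U" and U_le: "(\<integral>t. U t \<partial>\<rho>) \<le> (\<integral>t. B t \<partial>\<rho>) + KL' + x"
  proof -
    have "(\<integral>\<^sup>+t. ennreal (exp (U t - B t)) \<partial>p0) = (\<integral>\<^sup>+t. ennreal (normal_mixture y (X t) (V t)) \<partial>p0)"
      using V y by (intro nn_integral_cong) (simp add: normal_mixture_eq_exp U_def B_def)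
    then show "integrable \<rho> U" "(\<integral>t. U t \<partial>\<rho>) \<le> (\<integral>t. B t \<partial>\<rho>) + KL' + x"
      using integral_le_plus_KL_div[OF \<rho> p0 sets KL, of U B x] mixture_le int_lnV V y
      unfolding KL'_def U_def B_def by (auto simp: add_pos_nonneg)
  qed
  have U2: "(\<lambda>t. (X t)\<^sup>2 / (y + V t)) = (\<lambda>t. 2 * U t)"
    unfolding U_def by (simp add: fun_eq_iff field_split_simps)
  have "\<bar>\<integral>t. X t \<partial>\<rho>\<bar> \<le> sqrt ((\<integral>t. (X t)\<^sup>2 / (y + V t) \<partial>\<rho>) * (\<integral>t. y + V t \<partial>\<rho>))"
    by (rule abs_integral_le_sqrt_weighted) (use U2 int_U V y space int_V in \<open>auto simp: add_pos_nonneg\<close>)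
  also have "(\<integral>t. (X t)\<^sup>2 / (y + V t) \<partial>\<rho>) * (\<integral>t. y + V t \<partial>\<rho>) = 2 * (\<integral>t. U t \<partial>\<rho>) * (y + EV)"
    unfolding U2 EV_def using int_V by (simp add: \<rho>.prob_space)
  also have "\<dots> \<le> 2 * (y + EV) * (KL' + x + x / 2 * ln (1 + EV / y))"
  proof -
    have "(\<integral>t. B t \<partial>\<rho>) \<le> ln (1 + EV / y) / 2"
      using lnV_le unfolding B_def by simp
    also have "\<dots> \<le> x / 2 * ln (1 + EV / y)"
      using mult_right_mono[OF x, of "ln (1 + EV / y)"] EV y by simp
    finally have "2 * (\<integral>t. U t \<partial>\<rho>) \<le> 2 * (KL' + x + x / 2 * ln (1 + EV / y))"
      using U_le by simp
    from mult_right_mono[OF this, of "y + EV"] show ?thesis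
      using y EV by (metis add_nonneg_nonneg less_imp_le mult.assoc mult.commute)
  qed
  finally show ?thesis
    unfolding EV_def KL'_def by (simp add: real_sqrt_le_mono)
qed

section \<open>The i.i.d. loss model\<close>

lemma nn_integral_PiM_component:
  assumes "\<And>i. i \<in> I \<Longrightarrow> prob_space (M i)" and "i \<in> I" and [measurable]: "g \<in> borel_measurable (M i)"
  shows "(\<integral>\<^sup>+\<omega>. g (\<omega> i) \<partial>PiM I M) = (\<integral>\<^sup>+z. g z \<partial>M i)"
proof -
  have "(\<integral>\<^sup>+\<omega>. g (\<omega> i) \<partial>PiM I M) = (\<integral>\<^sup>+z. g z \<partial>distr (PiM I M) (M i) (\<lambda>\<omega>. \<omega> i))"
    using assms(2) by (intro nn_integral_distr[symmetric]) auto
  then show ?thesis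
    using assms by (simp add: distr_PiM_component)
qed

lemma Lhat_fun_upd_diff:
  assumes "k < n"
  shows "Lhat l n s th - Lhat l n (s(k := z)) th = (l th (s k) - l th z) / real n"
proof -
  have "(\<Sum>i<n. l th (s i)) = l th (s k) + (\<Sum>i\<in>{..<n} - {k}. l th (s i))"
    "(\<Sum>i<n. l th ((s(k := z)) i)) = l th z + (\<Sum>i\<in>{..<n} - {k}. l th (s i))"
    using assms by (simp_all add: sum.remove)
  then show ?thesis
    unfolding Lhat_def by (simp add: diff_divide_distrib[symmetric])
qed

locale iid_loss =
  fixes Z :: "'z measure" and \<Theta> :: "'t measure" and D :: "'z measure"
    and n :: nat and l :: "'t \<Rightarrow> 'z \<Rightarrow> real"
  assumes n: "n \<ge> 1"
    and D: "prob_space D" and sets_D: "sets D = sets Z"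
    and l_measurable_Z: "(\<lambda>(th, z). l th z) \<in> borel_measurable (\<Theta> \<Otimes>\<^sub>M Z)"
    and l_nonneg_Z: "\<And>th z. th \<in> space \<Theta> \<Longrightarrow> z \<in> space Z \<Longrightarrow> l th z \<ge> 0"
    and l_square_integrable: "\<And>th. th \<in> space \<Theta> \<Longrightarrow> integrable D (\<lambda>z. (l th z)\<^sup>2)"
begin

abbreviation S where "S \<equiv> sample_law n D"

sublocale D: prob_space D by (rule D)

sublocale S: prob_space S by (rule prob_space_PiM) (rule D)

lemma space_D: "space D = space Z"
  using sets_D by (rule sets_eq_imp_space_eq)

lemma l_measurable[measurable]: "(\<lambda>(th, z). l th z) \<in> borel_measurable (\<Theta> \<Otimes>\<^sub>M D)"
  using l_measurable_Z
  by (simp add: measurable_def sets_pair_measure_cong[OF refl sets_D] space_pair_measure space_D)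

lemma l_nonneg: "th \<in> space \<Theta> \<Longrightarrow> z \<in> space D \<Longrightarrow> l th z \<ge> 0"
  using l_nonneg_Z by (simp add: space_D)

lemma integrable_l:
  assumes "th \<in> space \<Theta>"
  shows "integrable D (l th)"
proof (rule D.square_integrable_imp_integrable)
  show "l th \<in> borel_measurable D" using assms by measurable
qed (use l_square_integrable[OF assms] in simp)

lemma integrable_square_diff: "th \<in> space \<Theta> \<Longrightarrow> integrable D (\<lambda>z. (a - l th z)\<^sup>2)"
  using integrable_l l_square_integrable by (simp add: power2_diff)

definition loss_var :: "'t \<Rightarrow> real" where
  "loss_var th = (\<integral>z. (Lpop l D th - l th z)\<^sup>2 \<partial>D)"

text \<open>Resampling coordinate k contributes the squared bias (l (s k) - L)^2 plus the variance
  of the loss, so Vsum is Vcond with the conditional expectations evaluated.\<close>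
definition Vsum :: "'t \<Rightarrow> (nat \<Rightarrow> 'z) \<Rightarrow> real" where
  "Vsum th s = (\<Sum>k<n. ((l th (s k) - Lpop l D th)\<^sup>2 + loss_var th) / (real n)\<^sup>2)"

lemma Lpop_measurable[measurable]: "Lpop l D \<in> borel_measurable \<Theta>"
  unfolding Lpop_def by measurable

lemma Vsum_measurable[measurable]: "(\<lambda>(th, s). Vsum th s) \<in> borel_measurable (\<Theta> \<Otimes>\<^sub>M S)"
  unfolding Vsum_def loss_var_def by measurable

lemma Lhat_measurable[measurable]: "(\<lambda>(th, s). Lhat l n s th) \<in> borel_measurable (\<Theta> \<Otimes>\<^sub>M S)"
  unfolding Lhat_def by measurable

lemma Vsum_nonneg: "0 \<le> Vsum th s"
proof -
  have "0 \<le> loss_var th"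
    unfolding loss_var_def by (intro integral_nonneg_AE AE_I2) simp
  then show ?thesis
    unfolding Vsum_def by (intro sum_nonneg) simp
qed

lemma integral_square_diff:
  assumes "th \<in> space \<Theta>"
  shows "(\<integral>z. (a - l th z)\<^sup>2 \<partial>D) = (a - Lpop l D th)\<^sup>2 + loss_var th"
proof -
  have "(a - l th z)\<^sup>2 = (a - Lpop l D th)\<^sup>2 + 2 * (a - Lpop l D th) * (Lpop l D th - l th z)
      + (Lpop l D th - l th z)\<^sup>2" for z
    by (simp add: power2_eq_square algebra_simps)
  then show ?thesis
    using integrable_l[OF assms] integrable_square_diff[OF assms]
    by (simp add: loss_var_def Lpop_def D.prob_space)
qed

lemma Lhat_minus_Lpop: "Lhat l n s th - Lpop l D th = (\<Sum>k<n. (l th (s k) - Lpop l D th) / real n)"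
  using n unfolding Lhat_def by (simp add: sum_subtractf sum_divide_distrib[symmetric] field_simps)

lemma Vcond_eq_sum_nn_integral:
  "Vcond l n D th s = (\<Sum>k<n. \<integral>\<^sup>+s'. ennreal (((l th (s k) - l th (s' k)) / real n)\<^sup>2) \<partial>S)"
  unfolding Vcond_def by (intro sum.cong refl nn_integral_cong) (simp add: Lhat_fun_upd_diff)

lemma Vcond_eq_Vsum:
  assumes th: "th \<in> space \<Theta>"
  shows "Vcond l n D th s = ennreal (Vsum th s)"
proof -
  have "(\<integral>\<^sup>+s'. ennreal (((l th (s k) - l th (s' k)) / real n)\<^sup>2) \<partial>S)
      = ennreal (((l th (s k) - Lpop l D th)\<^sup>2 + loss_var th) / (real n)\<^sup>2)" if k: "k < n" for k
  proof -
    have "(\<integral>\<^sup>+s'. ennreal (((l th (s k) - l th (s' k)) / real n)\<^sup>2) \<partial>S)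
        = (\<integral>\<^sup>+z. ennreal (((l th (s k) - l th z) / real n)\<^sup>2) \<partial>D)"
      using k th by (intro nn_integral_PiM_component D) auto
    also have "\<dots> = ennreal (\<integral>z. ((l th (s k) - l th z) / real n)\<^sup>2 \<partial>D)"
      using integrable_square_diff[OF th] by (intro nn_integral_eq_integral) (auto simp: power_divide)
    also have "(\<integral>z. ((l th (s k) - l th z) / real n)\<^sup>2 \<partial>D)
        = ((l th (s k) - Lpop l D th)\<^sup>2 + loss_var th) / (real n)\<^sup>2"
      using integral_square_diff[OF th] by (simp add: power_divide)
    finally show ?thesis .
  qed
  then show ?thesis
    unfolding Vcond_eq_sum_nn_integral Vsum_def
    by (simp add: sum_ennreal[symmetric] loss_var_def integral_nonneg_AE del: sum_ennreal)
qed

lemma nn_integral_exp_Lhat_le_1: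
  assumes th: "th \<in> space \<Theta>"
  shows "(\<integral>\<^sup>+s. ennreal (exp (u * (Lhat l n s th - Lpop l D th) - u\<^sup>2 * Vsum th s / 2)) \<partial>S) \<le> 1"
proof -
  define f where "f z = (l th z - Lpop l D th) / real n" for z
  have [measurable]: "f \<in> borel_measurable D"
    using th unfolding f_def by measurable
  have f_square: "(f z)\<^sup>2 = (Lpop l D th - l th z)\<^sup>2 / (real n)\<^sup>2" for z
    unfolding f_def by (simp add: power_divide power2_commute)
  have int_f: "integrable D f"
    using integrable_l[OF th] unfolding f_def by simp
  have int_f_square: "integrable D (\<lambda>z. (f z)\<^sup>2)"
    using integrable_square_diff[OF th] unfolding f_square by simp
  have mean: "(\<integral>z. f z \<partial>D) = 0"
    using integrable_l[OF th] unfolding f_def by (simp add: Lpop_def D.prob_space)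
  have var: "(\<integral>z. (f z)\<^sup>2 \<partial>D) = loss_var th / (real n)\<^sup>2"
    unfolding f_square loss_var_def by simp
  have "u * (Lhat l n s th - Lpop l D th) - u\<^sup>2 * Vsum th s / 2
      = u * (\<Sum>k<n. f (s k)) - u\<^sup>2 * (\<Sum>k<n. (f (s k))\<^sup>2 + (\<integral>z. (f z)\<^sup>2 \<partial>D)) / 2" for s
    unfolding Lhat_minus_Lpop Vsum_def var
    by (simp add: f_def power_divide add_divide_distrib)
  then show ?thesis
    using nn_integral_PiM_exp_sum_le_1[OF D finite_lessThan _ int_f int_f_square mean] by simp
qed

lemma nn_integral_normal_mixture_Lhat_le_1:
  assumes y: "y > 0" and p0: "prob_space p0" and sets_p0: "sets p0 = sets \<Theta>"
  shows "(\<integral>\<^sup>+s. \<integral>\<^sup>+th. ennreal (normal_mixture y (Lhat l n s th - Lpop l D th) (Vsum th s)) \<partial>p0 \<partial>S) \<le> 1"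
proof -
  interpret p0: prob_space p0 by (rule p0)
  interpret pair_sigma_finite p0 S
    by (intro pair_sigma_finite.intro p0.sigma_finite_measure_axioms S.sigma_finite_measure_axioms)
  note [measurable_cong] = sets_p0
  have "(\<integral>\<^sup>+s. \<integral>\<^sup>+th. ennreal (normal_mixture y (Lhat l n s th - Lpop l D th) (Vsum th s)) \<partial>p0 \<partial>S)
      = (\<integral>\<^sup>+th. \<integral>\<^sup>+s. ennreal (normal_mixture y (Lhat l n s th - Lpop l D th) (Vsum th s)) \<partial>S \<partial>p0)"
    by (rule Fubini') measurable
  also have "\<dots> \<le> (\<integral>\<^sup>+th. 1 \<partial>p0)"
  proof (intro nn_integral_mono S.nn_integral_normal_mixture_le_1[OF y] Vsum_nonneg)
    fix th assume "th \<in> space p0"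
    then have th: "th \<in> space \<Theta>" using sets_eq_imp_space_eq[OF sets_p0] by simp
    show "(\<lambda>s. Lhat l n s th - Lpop l D th) \<in> borel_measurable S" "(\<lambda>s. Vsum th s) \<in> borel_measurable S"
      using th by measurable
    show "(\<integral>\<^sup>+s. ennreal (exp (u * (Lhat l n s th - Lpop l D th) - u\<^sup>2 * Vsum th s / 2)) \<partial>S) \<le> 1" for u
      by (rule nn_integral_exp_Lhat_le_1[OF th])
  qed
  also have "\<dots> = 1"
    by (simp add: p0.emeasure_space_1)
  finally show ?thesis .
qed

lemma abs_integral_Lhat_minus_Lpop_le:
  assumes s: "s \<in> space S" and \<rho>: "prob_space \<rho>" and sets_\<rho>: "sets \<rho> = sets \<Theta>"
    and p0: "prob_space p0" and sets_p0: "sets p0 = sets \<Theta>" and y: "y > 0" and x: "x \<ge> 1"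
    and KL: "KL_div \<rho> p0 \<noteq> \<infinity>" and V_fin: "(\<integral>\<^sup>+th. Vcond l n D th s \<partial>\<rho>) \<noteq> \<infinity>"
    and mixture_le: "(\<integral>\<^sup>+th. ennreal (normal_mixture y (Lhat l n s th - Lpop l D th) (Vsum th s)) \<partial>p0)
      \<le> ennreal (exp x)"
  defines "EV \<equiv> enn2real (\<integral>\<^sup>+th. Vcond l n D th s \<partial>\<rho>)"
  shows "\<bar>\<integral>th. Lhat l n s th - Lpop l D th \<partial>\<rho>\<bar>
    \<le> sqrt (2 * (y + EV) * (real_of_ereal (KL_div \<rho> p0) + x + x / 2 * ln (1 + EV / y)))"
proof -
  note [measurable_cong] = sets_\<rho>
  have sets_\<rho>_p0: "sets \<rho> = sets p0"
    using sets_\<rho> sets_p0 by simp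
  have nn_V: "(\<integral>\<^sup>+th. Vcond l n D th s \<partial>\<rho>) = (\<integral>\<^sup>+th. ennreal (Vsum th s) \<partial>\<rho>)"
    using sets_eq_imp_space_eq[OF sets_\<rho>] by (intro nn_integral_cong) (simp add: Vcond_eq_Vsum)
  have int_V: "integrable \<rho> (\<lambda>th. Vsum th s)"
    using V_fin s unfolding nn_V by (intro integrableI_bounded) (auto simp: Vsum_nonneg less_top)
  have "EV = (\<integral>th. Vsum th s \<partial>\<rho>)"
    unfolding EV_def nn_V using int_V by (simp add: integral_eq_nn_integral Vsum_nonneg)
  then show ?thesis
    using abs_integral_le_PAC_Bayes[OF \<rho> p0 sets_\<rho>_p0 KL _ _ _ int_V y x] s sets_p0 mixture_le
    by (simp add: Vsum_nonneg measurable_cong_sets[OF sets_p0 refl])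
qed

lemma PAC_Bayes_high_probability:
  assumes phat: "\<And>s. s \<in> space S \<Longrightarrow> prob_space (phat s) \<and> sets (phat s) = sets \<Theta>"
    and p0: "prob_space p0" and sets_p0: "sets p0 = sets \<Theta>" and y: "y > 0" and x: "x \<ge> 1"
  shows "\<exists>A \<in> sets S. measure S A \<ge> 1 - exp (- x) \<and>
    (\<forall>s\<in>A. (\<integral>\<^sup>+th. Vcond l n D th s \<partial>phat s) \<noteq> \<infinity> \<longrightarrow> KL_div (phat s) p0 \<noteq> \<infinity> \<longrightarrow>
      (let EV = enn2real (\<integral>\<^sup>+th. Vcond l n D th s \<partial>phat s) in
       \<bar>\<integral>th. Lhat l n s th - Lpop l D th \<partial>phat s\<bar>
         \<le> sqrt (2 * (y + EV) * (real_of_ereal (KL_div (phat s) p0) + x + x / 2 * ln (1 + EV / y)))))"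
proof -
  interpret p0: prob_space p0 by (rule p0)
  note [measurable_cong] = sets_p0
  define mix where
    "mix s = (\<integral>\<^sup>+th. ennreal (normal_mixture y (Lhat l n s th - Lpop l D th) (Vsum th s)) \<partial>p0)" for s
  have [measurable]: "mix \<in> borel_measurable S"
    unfolding mix_def by measurable
  define A where "A = {s \<in> space S. mix s \<le> ennreal (exp x)}"
  have "A \<in> sets S"
    unfolding A_def by measurable
  moreover have "1 - exp (- x) \<le> measure S A"
    unfolding A_def mix_def using nn_integral_normal_mixture_Lhat_le_1[OF y p0 sets_p0]
    by (intro S.prob_nn_integral_le_exp) measurable
  moreover have "\<forall>s\<in>A. (\<integral>\<^sup>+th. Vcond l n D th s \<partial>phat s) \<noteq> \<infinity> \<longrightarrow> KL_div (phat s) p0 \<noteq> \<infinity> \<longrightarrow>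
      \<bar>\<integral>th. Lhat l n s th - Lpop l D th \<partial>phat s\<bar> \<le> sqrt (2 * (y + enn2real (\<integral>\<^sup>+th. Vcond l n D th s \<partial>phat s)) *
        (real_of_ereal (KL_div (phat s) p0) + x + x / 2 * ln (1 + enn2real (\<integral>\<^sup>+th. Vcond l n D th s \<partial>phat s) / y)))"
    by (intro ballI impI abs_integral_Lhat_minus_Lpop_le)
      (use phat p0 sets_p0 y x in \<open>auto simp: A_def mix_def\<close>)
  ultimately show ?thesis
    by (auto simp: Let_def)
qed

lemma nn_integral_Vcond_le:
  assumes s: "s \<in> space S" and sets_\<rho>: "sets \<rho> = sets \<Theta>"
  shows "(\<integral>\<^sup>+th. Vcond l n D th s \<partial>\<rho>) \<le> ennreal (1 / (real n)\<^sup>2) *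
    (\<integral>\<^sup>+th. \<integral>\<^sup>+s'. ennreal (\<Sum>k<n. (l th (s k))\<^sup>2 + (l th (s' k))\<^sup>2) \<partial>S \<partial>\<rho>)"
proof -
  note [measurable_cong] = sets_\<rho>
  have s_k: "k < n \<Longrightarrow> s k \<in> space D" for k
    using s by (auto simp: space_PiM)
  have "Vcond l n D th s \<le> ennreal (1 / (real n)\<^sup>2) *
      (\<integral>\<^sup>+s'. ennreal (\<Sum>k<n. (l th (s k))\<^sup>2 + (l th (s' k))\<^sup>2) \<partial>S)" if th: "th \<in> space \<Theta>" for th
  proof -
    have "Vcond l n D th s = (\<integral>\<^sup>+s'. (\<Sum>k<n. ennreal (((l th (s k) - l th (s' k)) / real n)\<^sup>2)) \<partial>S)"
      unfolding Vcond_eq_sum_nn_integral using th by (intro nn_integral_sum[symmetric]) measurable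
    also have "\<dots> \<le> (\<integral>\<^sup>+s'. ennreal (1 / (real n)\<^sup>2 * (\<Sum>k<n. (l th (s k))\<^sup>2 + (l th (s' k))\<^sup>2)) \<partial>S)"
    proof (intro nn_integral_mono)
      fix s' assume s': "s' \<in> space S"
      have square_le: "((a - b) / real n)\<^sup>2 \<le> (a\<^sup>2 + b\<^sup>2) / (real n)\<^sup>2" if "0 \<le> a" "0 \<le> b" for a b
        using that by (simp add: power_divide divide_right_mono power2_diff)
      have s'_k: "k < n \<Longrightarrow> s' k \<in> space D" for k
        using s' by (auto simp: space_PiM)
      have "(\<Sum>k<n. ennreal (((l th (s k) - l th (s' k)) / real n)\<^sup>2))
          = ennreal (\<Sum>k<n. ((l th (s k) - l th (s' k)) / real n)\<^sup>2)"
        by (simp add: sum_ennreal)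
      also have "\<dots> \<le> ennreal (\<Sum>k<n. ((l th (s k))\<^sup>2 + (l th (s' k))\<^sup>2) / (real n)\<^sup>2)"
        using th s_k s'_k l_nonneg by (intro ennreal_leI sum_mono square_le) auto
      finally show "(\<Sum>k<n. ennreal (((l th (s k) - l th (s' k)) / real n)\<^sup>2))
          \<le> ennreal (1 / (real n)\<^sup>2 * (\<Sum>k<n. (l th (s k))\<^sup>2 + (l th (s' k))\<^sup>2))"
        by (simp add: sum_divide_distrib)
    qed
    also have "\<dots> = (\<integral>\<^sup>+s'. ennreal (1 / (real n)\<^sup>2) * ennreal (\<Sum>k<n. (l th (s k))\<^sup>2 + (l th (s' k))\<^sup>2) \<partial>S)"
      by (intro nn_integral_cong ennreal_mult') simp
    also have "\<dots> = ennreal (1 / (real n)\<^sup>2) * (\<integral>\<^sup>+s'. ennreal (\<Sum>k<n. (l th (s k))\<^sup>2 + (l th (s' k))\<^sup>2) \<partial>S)"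
      using th s_k by (intro nn_integral_cmult) measurable
    finally show ?thesis .
  qed
  then have "(\<integral>\<^sup>+th. Vcond l n D th s \<partial>\<rho>) \<le> (\<integral>\<^sup>+th. ennreal (1 / (real n)\<^sup>2) *
      (\<integral>\<^sup>+s'. ennreal (\<Sum>k<n. (l th (s k))\<^sup>2 + (l th (s' k))\<^sup>2) \<partial>S) \<partial>\<rho>)"
    using sets_eq_imp_space_eq[OF sets_\<rho>] by (intro nn_integral_mono) auto
  also have "\<dots> = ennreal (1 / (real n)\<^sup>2) *
      (\<integral>\<^sup>+th. \<integral>\<^sup>+s'. ennreal (\<Sum>k<n. (l th (s k))\<^sup>2 + (l th (s' k))\<^sup>2) \<partial>S \<partial>\<rho>)"
    using s_k by (intro nn_integral_cmult) measurable
  finally show ?thesis .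
qed

end

theorem corollary1:
  fixes Z :: "'z measure" and \<Theta> :: "'t measure" and D :: "'z measure"
    and n :: nat and l :: "'t \<Rightarrow> 'z \<Rightarrow> real"
    and phat :: "(nat \<Rightarrow> 'z) \<Rightarrow> 't measure" and p0 :: "'t measure"
  assumes n: "n \<ge> 1"
    and D: "prob_space D" "sets D = sets Z"
    and l_meas: "(\<lambda>(th, z). l th z) \<in> borel_measurable (\<Theta> \<Otimes>\<^sub>M Z)"
    and l_nonneg: "\<And>th z. th \<in> space \<Theta> \<Longrightarrow> z \<in> space Z \<Longrightarrow> l th z \<ge> 0"
    and l_sq: "\<And>th. th \<in> space \<Theta> \<Longrightarrow> integrable D (\<lambda>z. (l th z)\<^sup>2)"
    and phat: "phat \<in> measurable (sample_law n D) (prob_algebra \<Theta>)"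
    and p0: "prob_space p0" "sets p0 = sets \<Theta>"
    and finite_risk: "AE s in sample_law n D.
        (\<integral>\<^sup>+ th. ennreal (Lhat l n s th + Lpop l D th) \<partial>(phat s)) < \<infinity>"
  shows "(\<forall>y>0. \<forall>x\<ge>2. \<exists>A \<in> sets (sample_law n D).
            measure (sample_law n D) A \<ge> 1 - exp (- x) \<and>
            (\<forall>s\<in>A.
               (\<integral>\<^sup>+ th. Vcond l n D th s \<partial>(phat s)) \<noteq> \<infinity> \<longrightarrow>
               KL_div (phat s) p0 \<noteq> \<infinity> \<longrightarrow>
               (let EV = enn2real (\<integral>\<^sup>+ th. Vcond l n D th s \<partial>(phat s)) in
                \<bar>\<integral> th. Lhat l n s th - Lpop l D th \<partial>(phat s)\<bar>
                  \<le> sqrt (2 * (y + EV) *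
                       (real_of_ereal (KL_div (phat s) p0) + x + x / 2 * ln (1 + EV / y))))))
         \<and> (AE s in sample_law n D.
              (\<integral>\<^sup>+ th. Vcond l n D th s \<partial>(phat s))
                \<le> ennreal (1 / (real n)\<^sup>2) *
                  (\<integral>\<^sup>+ th. \<integral>\<^sup>+ s'. ennreal (\<Sum>k<n. (l th (s k))\<^sup>2 + (l th (s' k))\<^sup>2)
                      \<partial>(sample_law n D) \<partial>(phat s)))"
proof -
  interpret iid_loss Z \<Theta> D n l
    by (rule iid_loss.intro) (fact n D l_meas l_nonneg l_sq)+
  have phat_s: "prob_space (phat s) \<and> sets (phat s) = sets \<Theta>" if "s \<in> space (sample_law n D)" for s
    using measurable_space[OF phat that] by (simp add: space_prob_algebra)
  show ?thesis
    by (intro conjI allI impI PAC_Bayes_high_probability AE_I2 nn_integral_Vcond_le)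
      (use phat_s p0 in auto)
qed

end
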